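(* Let $\delta\ge0$ and let $T\in C^1(\mathbb{T}^1)$ be a diffeomorphism with $T'>0$ and rotation number $\rho\in D_\delta$. Suppose $T$ has an invariant probability measure with a continuous positive density $h$, and that for some constant $\sigma\in[0,1+\delta)$ there is $C$ with $|(T^{q_n})'(\xi)-1|\le CE_{n,\sigma}$ for all $n\ge0$, $\xi\in\mathbb{T}^1$. Then there is $C'$ with $|(T^{q_n})'(\xi)-1|\le C'\Delta_n^{\sigma/(1+\delta)}$ for all $n\ge0$, $\xi\in\mathbb{T}^1$, and $h\in C^{\max\{0,\sigma-\delta\}}(\mathbb{T}^1)$.
   Context: An irrational $\rho$ is in $D_\delta$ if there is $C>0$ with $|\rho-p/q|\ge Cq^{-2-\delta}$ for all rationals $p/q$. Write $\rho\in(0,1)$ as a continued fraction $\rho=[k_1,k_2,\dots]$ with convergents $p_n/q_n$, where $p_0=0,q_0=1,p_{-1}=1,q_{-1}=0$, $p_n=k_np_{n-1}+p_{n-2}$, $q_n=k_nq_{n-1}+q_{n-2}$. Set $\Delta_n=|q_n\rho-p_n|$ for $n\ge-1$ (so $\Delta_{-1}=1$), and for $\sigma\ge0$ set $E_{n,\sigma}=\sum_{k=0}^n\frac{\Delta_n}{\Delta_{n-k}}\Delta_{n-k-1}^\sigma$. $C^\alpha$ for $\alpha\in(0,1]$ means $\alpha$-Hölder; $C^0$ means continuous. *)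

theory Defs
  imports "HOL-Analysis.Analysis"
begin

definition diophantine_class :: "real \<Rightarrow> real set" where
  "diophantine_class \<delta> = {\<rho>. \<rho> \<notin> \<rat> \<and>
     (\<exists>C>0. \<forall>(p::int) (q::int). q > 0 \<longrightarrow> \<bar>\<rho> - real_of_int p / real_of_int q\<bar> \<ge> C * real_of_int q powr (-2 - \<delta>))}"

fun cf_rem :: "real \<Rightarrow> nat \<Rightarrow> real" where
  "cf_rem r 0 = r"
| "cf_rem r (Suc n) = frac (1 / cf_rem r n)"

definition cf_digit :: "real \<Rightarrow> nat \<Rightarrow> int" where
  "cf_digit r n = \<lfloor>1 / cf_rem r (n - 1)\<rfloor>"   \<comment> \<open>k_n for n \<ge> 1\<close>

text \<open>Shifted convergents: cf_pq r m = (p_(m-1), q_(m-1)); so cf_pq r 0 = (p_{-1}, q_{-1}) = (1,0).\<close>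
fun cf_pq :: "real \<Rightarrow> nat \<Rightarrow> int \<times> int" where
  "cf_pq r 0 = (1, 0)"
| "cf_pq r (Suc 0) = (0, 1)"
| "cf_pq r (Suc (Suc m)) =
     (cf_digit r (Suc m) * fst (cf_pq r (Suc m)) + fst (cf_pq r m),
      cf_digit r (Suc m) * snd (cf_pq r (Suc m)) + snd (cf_pq r m))"

definition cf_p :: "real \<Rightarrow> nat \<Rightarrow> int" where "cf_p r n = fst (cf_pq r (Suc n))"
definition cf_q :: "real \<Rightarrow> nat \<Rightarrow> int" where "cf_q r n = snd (cf_pq r (Suc n))"

text \<open>cf_Delta_sh r m = Delta_(m-1) = |q_(m-1) r - p_(m-1)|; in particular cf_Delta_sh r 0 = 1.\<close>
definition cf_Delta_sh :: "real \<Rightarrow> nat \<Rightarrow> real" where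
  "cf_Delta_sh r m = \<bar>real_of_int (snd (cf_pq r m)) * r - real_of_int (fst (cf_pq r m))\<bar>"

definition cf_Delta :: "real \<Rightarrow> nat \<Rightarrow> real" where
  "cf_Delta r n = cf_Delta_sh r (Suc n)"

text \<open>E_{n,sigma} = sum_{k=0}^n Delta_n / Delta_(n-k) * Delta_(n-k-1)^sigma.\<close>
definition cf_E :: "real \<Rightarrow> nat \<Rightarrow> real \<Rightarrow> real" where
  "cf_E r n \<sigma> = (\<Sum>k=0..n. cf_Delta_sh r (Suc n) / cf_Delta_sh r (Suc (n - k))
                              * cf_Delta_sh r (n - k) powr \<sigma>)"

text \<open>Rotation number of a circle map given by a lift F (F(x+1) = F x + 1), taken in [0,1).\<close>
definition rotation_number :: "(real \<Rightarrow> real) \<Rightarrow> real" where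
  "rotation_number F = frac (lim (\<lambda>n. (F ^^ n) 0 / real n))"

definition holder_class :: "real \<Rightarrow> (real \<Rightarrow> real) set" where
  "holder_class \<alpha> = (if \<alpha> = 0 then {h. continuous_on UNIV h}
     else {h. \<exists>C. \<forall>x y. \<bar>h x - h y\<bar> \<le> C * \<bar>x - y\<bar> powr \<alpha>})"

end

theory Submission
  imports Defs
begin

text \<open>
  The distribution function H x = \<integral> h over [0, x] of the invariant density conjugates F to
  the translation by some \<kappa> with frac \<kappa> = \<rho>, so (F^n)'(\<xi>) = h \<xi> / h (F^n \<xi>). The hypothesis
  therefore bounds the increments of g = h \<circ> H^-1 under the translations by
  \<plusminus>\<Delta>_n = \<plusminus>(q_n \<rho> - p_n) (mod 1). The scales \<Delta>_n halve at least every two steps, so the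
  terms of E_(n,\<sigma>) decay geometrically relative to \<Delta>_n^(\<sigma>/(1+\<delta>)); the Diophantine
  condition gives \<Delta>_(n+1) \<ge> c \<Delta>_n^(1+\<delta>), so a length t \<le> \<Delta>_j is covered by at most
  \<Delta>_j^(-\<delta>) / c steps of length \<Delta>_(j+1). Covering a length greedily, scale by scale, thus
  costs O(t^(\<sigma>-\<delta>)), and g and h are (\<sigma>-\<delta>)-Hoelder continuous.
\<close>

section \<open>Continued fractions\<close>

lemma mult_frac_inverse_le_half:
  assumes "0 < (x::real)" "x < 1"
  shows "x * frac (1 / x) \<le> 1 / 2"
proof (cases "x \<le> 1 / 2")
  case True
  then show ?thesis
    using assms frac_lt_1[of "1 / x"] by (smt (verit) frac_ge_0 mult_left_le)
next
  case False
  then have "\<lfloor>1 / x\<rfloor> = 1"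
    using assms by (simp add: floor_eq_iff field_simps)
  then show ?thesis
    using assms False by (simp add: frac_def field_simps)
qed

context
  fixes r :: real
  assumes irrational: "r \<notin> \<rat>" and pos: "0 < r" and less_1: "r < 1"
begin

lemma cf_rem_irrational: "cf_rem r n \<notin> \<rat> \<and> 0 < cf_rem r n \<and> cf_rem r n < 1"
proof (induction n)
  case 0
  then show ?case using irrational pos less_1 by simp
next
  case (Suc n)
  then have "1 / cf_rem r n \<notin> \<rat>"
    by (simp add: divide_inverse)
  then have "frac (1 / cf_rem r n) \<notin> \<rat>"
    by (metis Rats_add Rats_of_int frac_def diff_add_cancel)
  moreover have "frac (1 / cf_rem r n) \<notin> \<int>"
    using calculation Ints_subset_Rats by blast
  ultimately show ?case by (simp add: frac_lt_1)
qed

lemma cf_rem_pos: "0 < cf_rem r n" and cf_rem_less_1: "cf_rem r n < 1"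
  using cf_rem_irrational by auto

lemma cf_digit_ge_1: "cf_digit r (Suc m) \<ge> 1"
  using cf_rem_pos[of m] cf_rem_less_1[of m] by (simp add: cf_digit_def)

lemma cf_rem_Suc: "cf_rem r (Suc m) = 1 / cf_rem r m - of_int (cf_digit r (Suc m))"
  by (simp add: cf_digit_def frac_def)

lemma cf_pq_error:
  "of_int (snd (cf_pq r m)) * r - of_int (fst (cf_pq r m)) = (-1) ^ Suc m * (\<Prod>i<m. cf_rem r i)"
proof (induction m rule: induct_nat_012)
  case (ge2 m)
  let ?err = "\<lambda>m. of_int (snd (cf_pq r m)) * r - of_int (fst (cf_pq r m)) :: real"
  let ?k = "of_int (cf_digit r (Suc m)) :: real"
  have "?err (Suc (Suc m)) = ?k * ?err (Suc m) + ?err m"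
    by (simp add: algebra_simps)
  also have "\<dots> = (-1) ^ Suc m * (\<Prod>i<m. cf_rem r i) * (1 - ?k * cf_rem r m)"
    using ge2 by (simp add: algebra_simps)
  also have "1 - ?k * cf_rem r m = cf_rem r m * cf_rem r (Suc m)"
    using cf_rem_pos[of m] by (simp add: cf_rem_Suc field_simps del: cf_rem.simps)
  finally show ?case
    by (simp add: algebra_simps del: cf_rem.simps)
qed simp_all

lemma cf_Delta_sh_eq_prod: "cf_Delta_sh r m = (\<Prod>i<m. cf_rem r i)"
  using cf_rem_pos unfolding cf_Delta_sh_def cf_pq_error
  by (simp add: abs_mult abs_prod less_imp_le del: cf_rem.simps)

lemma cf_Delta_sh_pos: "0 < cf_Delta_sh r m"
  using cf_rem_pos by (simp add: cf_Delta_sh_eq_prod prod_pos del: cf_rem.simps)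

lemma cf_Delta_sh_Suc: "cf_Delta_sh r (Suc m) = cf_Delta_sh r m * cf_rem r m"
  by (simp add: cf_Delta_sh_eq_prod del: cf_rem.simps)

lemma cf_Delta_sh_Suc_le: "cf_Delta_sh r (Suc m) \<le> cf_Delta_sh r m"
  using cf_Delta_sh_pos[of m] cf_rem_less_1[of m] by (simp add: cf_Delta_sh_Suc del: cf_rem.simps)

lemma cf_Delta_sh_Suc_Suc_le_half: "cf_Delta_sh r (Suc (Suc m)) \<le> cf_Delta_sh r m / 2"
proof -
  have "cf_Delta_sh r (Suc (Suc m)) = cf_Delta_sh r m * (cf_rem r m * frac (1 / cf_rem r m))"
    by (simp add: cf_Delta_sh_Suc)
  also have "\<dots> \<le> cf_Delta_sh r m * (1 / 2)"
    using cf_Delta_sh_pos[of m] cf_rem_pos[of m] cf_rem_less_1[of m]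
    by (intro mult_left_mono mult_frac_inverse_le_half) auto
  finally show ?thesis by simp
qed

lemma cf_Delta_sh_recurrence:
  "cf_Delta_sh r m = of_int (cf_digit r (Suc m)) * cf_Delta_sh r (Suc m) + cf_Delta_sh r (Suc (Suc m))"
  using cf_rem_pos[of m]
  by (simp add: cf_Delta_sh_Suc cf_rem_Suc field_simps del: cf_rem.simps)

lemma cf_q_sh_ge_1: "snd (cf_pq r (Suc m)) \<ge> 1"
proof (induction m rule: induct_nat_012)
  case (ge2 m)
  have "1 * 1 \<le> cf_digit r (Suc (Suc m)) * snd (cf_pq r (Suc (Suc m)))"
    using ge2 cf_digit_ge_1[of "Suc m"] by (intro mult_mono) auto
  with ge2 show ?case by simp
qed (use cf_digit_ge_1[of 0] in simp_all)

lemma cf_q_sh_nonneg: "snd (cf_pq r m) \<ge> 0"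
  using cf_q_sh_ge_1 by (cases m) (simp, smt (verit))

lemma cf_q_Delta_identity:
  "of_int (snd (cf_pq r (Suc m))) * cf_Delta_sh r m + of_int (snd (cf_pq r m)) * cf_Delta_sh r (Suc m) = 1"
proof (induction m)
  case 0
  then show ?case by (simp add: cf_Delta_sh_def)
next
  case (Suc m)
  then show ?case
    by (simp add: algebra_simps cf_Delta_sh_recurrence[of m])
qed

lemma cf_q_mult_Delta_sh_le_1: "of_int (snd (cf_pq r (Suc m))) * cf_Delta_sh r m \<le> 1"
proof -
  have "0 \<le> of_int (snd (cf_pq r m)) * cf_Delta_sh r (Suc m)"
    using cf_q_sh_nonneg[of m] cf_Delta_sh_pos[of "Suc m"] by simp
  then show ?thesis
    using cf_q_Delta_identity[of m] by linarith
qed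

end

lemma cf_Delta_sh_diophantine:
  assumes dioph: "r \<in> diophantine_class \<delta>" and "0 < r" "r < 1" "\<delta> \<ge> 0"
  shows "\<exists>c>0. \<forall>m. c * cf_Delta_sh r m powr (1 + \<delta>) \<le> cf_Delta_sh r (Suc m)"
proof -
  have irr: "r \<notin> \<rat>" using dioph by (simp add: diophantine_class_def)
  obtain C where "C > 0" and C: "\<And>p q. (q::int) > 0 \<Longrightarrow> C * of_int q powr (-2 - \<delta>) \<le> \<bar>r - of_int p / of_int q\<bar>"
    using dioph unfolding diophantine_class_def by blast
  have "C * cf_Delta_sh r m powr (1 + \<delta>) \<le> cf_Delta_sh r (Suc m)" for m
  proof -
    define q where "q = snd (cf_pq r (Suc m))"
    define p where "p = fst (cf_pq r (Suc m))"
    define D where "D = cf_Delta_sh r m"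
    have "q \<ge> 1" using cf_q_sh_ge_1[OF irr assms(2,3)] by (simp add: q_def)
    have "D > 0" using cf_Delta_sh_pos[OF irr assms(2,3)] by (simp add: D_def)
    have "of_int q * D \<le> 1"
      using cf_q_mult_Delta_sh_le_1[OF irr assms(2,3)] by (simp add: q_def D_def)
    then have "D powr (1 + \<delta>) * of_int q powr (1 + \<delta>) \<le> 1"
      using \<open>q \<ge> 1\<close> \<open>D > 0\<close> assms(4)
      by (simp add: powr_mult[symmetric] mult.commute powr_le1)
    then have "D powr (1 + \<delta>) \<le> of_int q powr (- (1 + \<delta>))"
      using \<open>q \<ge> 1\<close> unfolding powr_minus_divide by (simp add: le_divide_eq)
    then have "C * D powr (1 + \<delta>) \<le> C * of_int q powr (- (1 + \<delta>))"
      using \<open>C > 0\<close> by simp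
    also have "of_int q powr (- (1 + \<delta>)) = of_int q * of_int q powr (-2 - \<delta>)"
      using \<open>q \<ge> 1\<close> powr_add[of "of_int q" 1 "-2 - \<delta>"] by simp
    also have "C * (of_int q * of_int q powr (-2 - \<delta>)) = of_int q * (C * of_int q powr (-2 - \<delta>))"
      by simp
    also have "\<dots> \<le> of_int q * \<bar>r - of_int p / of_int q\<bar>"
      using C[of q p] \<open>q \<ge> 1\<close> by (intro mult_left_mono) auto
    also have "\<dots> = \<bar>of_int q * r - of_int p\<bar>"
    proof -
      have "of_int q * (r - of_int p / of_int q) = of_int q * r - of_int p"
        using \<open>q \<ge> 1\<close> by (simp add: field_simps)
      then show ?thesis
        using \<open>q \<ge> 1\<close> by (metis abs_mult abs_of_nonneg of_int_0_le_iff order_trans zero_le_one)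
    qed
    also have "\<dots> = cf_Delta_sh r (Suc m)"
      by (simp add: cf_Delta_sh_def p_def q_def)
    finally show ?thesis by (simp add: D_def)
  qed
  with \<open>C > 0\<close> show ?thesis by blast
qed

section \<open>Scales with Diophantine decay\<close>

locale diophantine_scales =
  fixes D :: "nat \<Rightarrow> real" and c \<delta> :: real
  assumes D_pos: "\<And>m. 0 < D m"
    and D_Suc_le: "\<And>m. D (Suc m) \<le> D m"
    and D_Suc_Suc_le_half: "\<And>m. D (Suc (Suc m)) \<le> D m / 2"
    and D_Suc_ge: "\<And>m. c * D m powr (1 + \<delta>) \<le> D (Suc m)"
    and c_pos: "0 < c"
    and delta_nonneg: "0 \<le> \<delta>"
begin

lemma D_antimono: "m \<le> n \<Longrightarrow> D n \<le> D m"
  using decseq_SucI[of D, OF D_Suc_le] by (simp add: decseq_def)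

lemma D_add_le: "D (j + k) \<le> sqrt 2 * (1 / sqrt 2) ^ k * D j"
proof (induction k rule: induct_nat_012)
  case 0
  then show ?case using D_pos[of j] by simp
next
  case 1
  then show ?case using D_Suc_le[of j] by simp
next
  case (ge2 k)
  have "D (j + Suc (Suc k)) \<le> D (j + k) / 2"
    using D_Suc_Suc_le_half[of "j + k"] by simp
  also have "\<dots> \<le> sqrt 2 * (1 / sqrt 2) ^ k * D j / 2"
    using ge2 by simp
  also have "\<dots> = sqrt 2 * (1 / sqrt 2) ^ Suc (Suc k) * D j"
    by (simp add: field_simps)
  finally show ?case .
qed

lemma D_tendsto_0: "D \<longlonglongrightarrow> 0"
proof (rule Lim_null_comparison)
  show "\<forall>\<^sub>F k in sequentially. norm (D k) \<le> sqrt 2 * (1 / sqrt 2) ^ k * D 0"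
    using D_add_le[of 0] D_pos by (simp add: less_imp_le)
  show "(\<lambda>k. sqrt 2 * (1 / sqrt 2) ^ k * D 0) \<longlonglongrightarrow> 0"
    by (intro tendsto_mult_left_zero tendsto_mult_right_zero LIMSEQ_power_zero) simp
qed

lemma exists_D_less: "0 < \<eta> \<Longrightarrow> \<exists>N. D N < \<eta>"
  using order_tendstoD(2)[OF D_tendsto_0] by (meson eventually_sequentially order_refl)

lemma D_bracket:
  assumes "0 < t" "t < D 0"
  obtains j where "D (Suc j) \<le> t" "t < D j"
proof -
  obtain N where "D N < t" using exists_D_less[OF \<open>0 < t\<close>] ..
  define n where "n = (LEAST n. D n \<le> t)"
  have "D n \<le> t" unfolding n_def using \<open>D N < t\<close> by (metis LeastI less_imp_le)
  have "n \<noteq> 0" using \<open>D n \<le> t\<close> assms(2) by (metis not_less)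
  then obtain j where "n = Suc j" by (cases n) auto
  have "t < D j" using not_less_Least[of j "\<lambda>n. D n \<le> t"] \<open>n = Suc j\<close> by (simp add: n_def)
  with \<open>D n \<le> t\<close> \<open>n = Suc j\<close> show thesis by (intro that) simp_all
qed

lemma D_Suc_Suc_powr_le: "0 \<le> \<beta> \<Longrightarrow> D (Suc (Suc j)) powr \<beta> \<le> 2 powr (- \<beta>) * D j powr \<beta>"
proof -
  assume "0 \<le> \<beta>"
  have "D (Suc (Suc j)) powr \<beta> \<le> (D j / 2) powr \<beta>"
    using D_Suc_Suc_le_half[of j] D_pos \<open>0 \<le> \<beta>\<close> by (intro powr_mono2) (auto simp: less_imp_le)
  also have "\<dots> = 2 powr (- \<beta>) * D j powr \<beta>"
    using D_pos[of j] powr_minus_divide[of 2 \<beta>] by (simp add: powr_divide)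
  finally show ?thesis .
qed

lemma D_powr_le_Suc: "0 \<le> a \<Longrightarrow> D m powr ((1 + \<delta>) * a) \<le> c powr (- a) * D (Suc m) powr a"
proof -
  assume "0 \<le> a"
  have "D m powr ((1 + \<delta>) * a) = (D m powr (1 + \<delta>)) powr a"
    by (simp add: powr_powr)
  also have "\<dots> \<le> (D (Suc m) / c) powr a"
    using D_Suc_ge[of m] c_pos \<open>0 \<le> a\<close> by (intro powr_mono2) (auto simp: field_simps)
  also have "\<dots> = c powr (- a) * D (Suc m) powr a"
    unfolding powr_divide by (simp add: powr_minus divide_inverse)
  finally show ?thesis .
qed

lemma scale_sum_term_le:
  assumes "0 \<le> a" "a < 1" "k \<le> n"
  shows "D (Suc n) / D (Suc (n - k)) * D (n - k) powr ((1 + \<delta>) * a)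
           \<le> c powr (- a) * sqrt 2 powr (1 - a) * D (Suc n) powr a * ((1 / sqrt 2) powr (1 - a)) ^ k"
proof -
  define x y where "x = D (Suc n)" and "y = D (Suc (n - k))"
  have "x > 0" "y > 0" using D_pos by (auto simp: x_def y_def)
  have split: "x / y * y powr a = x powr a * (x / y) powr (1 - a)"
    using \<open>x > 0\<close> \<open>y > 0\<close> by (simp add: powr_divide powr_diff field_simps flip: powr_add)
  have "x \<le> sqrt 2 * (1 / sqrt 2) ^ k * y"
    using D_add_le[of "Suc (n - k)" k] assms(3) by (simp add: x_def y_def)
  then have "(x / y) powr (1 - a) \<le> (sqrt 2 * (1 / sqrt 2) ^ k) powr (1 - a)"
    using \<open>x > 0\<close> \<open>y > 0\<close> assms(2) by (intro powr_mono2) (auto simp: field_simps)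
  also have "\<dots> = sqrt 2 powr (1 - a) * ((1 / sqrt 2) powr (1 - a)) ^ k"
    by (simp add: powr_mult powr_power powr_powr mult.commute flip: powr_realpow)
  finally have ratio: "(x / y) powr (1 - a) \<le> sqrt 2 powr (1 - a) * ((1 / sqrt 2) powr (1 - a)) ^ k" .
  have "x / y * D (n - k) powr ((1 + \<delta>) * a) \<le> x / y * (c powr (- a) * y powr a)"
    using D_powr_le_Suc[OF assms(1), of "n - k"] assms(3) \<open>x > 0\<close> \<open>y > 0\<close>
    by (intro mult_left_mono) (auto simp: y_def Suc_diff_le)
  also have "\<dots> = c powr (- a) * (x / y * y powr a)"
    by (simp add: mult_ac)
  also have "\<dots> = c powr (- a) * x powr a * (x / y) powr (1 - a)"
    by (simp only: split mult.assoc)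
  also have "\<dots> \<le> c powr (- a) * x powr a * (sqrt 2 powr (1 - a) * ((1 / sqrt 2) powr (1 - a)) ^ k)"
    using ratio by (intro mult_left_mono) auto
  finally show ?thesis by (simp add: x_def y_def algebra_simps)
qed

lemma scale_sum_le:
  assumes "0 \<le> a" "a < 1"
  shows "\<exists>C. \<forall>n. (\<Sum>k=0..n. D (Suc n) / D (Suc (n - k)) * D (n - k) powr ((1 + \<delta>) * a))
                   \<le> C * D (Suc n) powr a"
proof -
  define \<phi> where "\<phi> = (1 / sqrt 2) powr (1 - a)"
  have "0 < \<phi>" by (simp add: \<phi>_def)
  have "\<phi> < 1"
    using assms(2) powr_less_mono2[of "1 - a" "1 / sqrt 2" 1] by (simp add: \<phi>_def)
  define B where "B = c powr (- a) * sqrt 2 powr (1 - a)"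
  have "(\<Sum>k=0..n. D (Suc n) / D (Suc (n - k)) * D (n - k) powr ((1 + \<delta>) * a))
          \<le> B / (1 - \<phi>) * D (Suc n) powr a" for n
  proof -
    have "(\<Sum>k=0..n. D (Suc n) / D (Suc (n - k)) * D (n - k) powr ((1 + \<delta>) * a))
        \<le> (\<Sum>k=0..n. B * D (Suc n) powr a * \<phi> ^ k)"
      using scale_sum_term_le[OF assms] by (intro sum_mono) (simp add: B_def \<phi>_def)
    also have "\<dots> = B * D (Suc n) powr a * (\<Sum>k=0..n. \<phi> ^ k)"
      by (simp add: sum_distrib_left)
    also have "\<dots> \<le> B * D (Suc n) powr a * (1 / (1 - \<phi>))"
      using geometric_sum_less[OF \<open>0 < \<phi>\<close> \<open>\<phi> < 1\<close>, of "{0..n}"]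
      by (intro mult_left_mono) (auto simp: B_def)
    finally show ?thesis by simp
  qed
  then show ?thesis by blast
qed

end

lemma shift_multiple_le:
  fixes g :: "real \<Rightarrow> real"
  assumes "\<And>v. \<bar>g (v + d) - g v\<bar> \<le> M"
  shows "\<bar>g (v + real b * d) - g v\<bar> \<le> real b * M"
proof (induction b)
  case (Suc b)
  let ?w = "v + real b * d"
  have "\<bar>g (v + real (Suc b) * d) - g v\<bar> = \<bar>(g (?w + d) - g ?w) + (g ?w - g v)\<bar>"
    by (simp add: algebra_simps)
  also have "\<dots> \<le> M + real b * M"
    using assms[of ?w] Suc by (smt (verit))
  finally show ?case by (simp add: algebra_simps)
qed simp

locale shift_holder = diophantine_scales +
  fixes \<sigma> K :: real and g :: "real \<Rightarrow> real"
  assumes sigma_gt: "\<delta> < \<sigma>" and sigma_less: "\<sigma> < 1 + \<delta>"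
    and K_nonneg: "0 \<le> K"
    and g_cont: "continuous_on UNIV g"
    and g_bounded: "bounded (range g)"
    and g_shift: "\<And>i v. 1 \<le> i \<Longrightarrow> \<bar>g (v + D i) - g v\<bar> \<le> K * D i powr (\<sigma> / (1 + \<delta>))"
begin

definition "K\<^sub>1 = K * c powr (\<sigma> / (1 + \<delta>) - 1)"

definition "K\<^sub>2 = 2 * K\<^sub>1 / (1 - 2 powr (\<delta> - \<sigma>))"

lemma K\<^sub>1_nonneg: "0 \<le> K\<^sub>1"
  using K_nonneg by (simp add: K\<^sub>1_def)

lemma K\<^sub>2_nonneg: "0 \<le> K\<^sub>2" and K\<^sub>2_fixpoint: "2 * K\<^sub>1 + K\<^sub>2 * 2 powr (\<delta> - \<sigma>) = K\<^sub>2"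
proof -
  have "2 powr (\<delta> - \<sigma>) < 1" using sigma_gt by (intro powr_less_one) auto
  then show "0 \<le> K\<^sub>2"
    using K\<^sub>1_nonneg by (simp add: K\<^sub>2_def)
  have "K\<^sub>2 * (1 - 2 powr (\<delta> - \<sigma>)) = 2 * K\<^sub>1"
    using sigma_gt unfolding K\<^sub>2_def by simp
  then show "2 * K\<^sub>1 + K\<^sub>2 * 2 powr (\<delta> - \<sigma>) = K\<^sub>2"
    by (simp add: algebra_simps)
qed

text \<open>Covering t \<le> D j takes at most D j / D (j + 1) \<le> D j powr (-\<delta>) / c shifts by D (j + 1);
  this is where the exponent drops from \<sigma> / (1 + \<delta>) to \<sigma> - \<delta>.\<close>
lemma shift_multiple_cost:
  assumes "0 < t" "t \<le> D j" "real b \<le> t / D (Suc j)"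
  shows "real b * (K * D (Suc j) powr (\<sigma> / (1 + \<delta>))) \<le> K\<^sub>1 * t powr (\<sigma> - \<delta>)"
proof -
  define a where "a = \<sigma> / (1 + \<delta>)"
  have "a < 1" "(1 + \<delta>) * a = \<sigma>"
    using sigma_less delta_nonneg by (auto simp: a_def divide_less_eq)
  have "c * t powr (1 + \<delta>) \<le> D (Suc j)"
    using assms(1,2) c_pos delta_nonneg D_Suc_ge[of j]
    by (smt (verit) mult_left_mono powr_mono2)
  then have Dpow: "D (Suc j) powr (a - 1) \<le> (c * t powr (1 + \<delta>)) powr (a - 1)"
    using \<open>a < 1\<close> c_pos assms(1) by (intro powr_mono2') auto
  have "real b * D (Suc j) powr a \<le> t / D (Suc j) * D (Suc j) powr a"
    using assms(3) by (intro mult_right_mono) auto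
  also have "\<dots> = t * D (Suc j) powr (a - 1)"
    using D_pos[of "Suc j"] by (simp add: powr_diff)
  also have "\<dots> \<le> t * (c * t powr (1 + \<delta>)) powr (a - 1)"
    using Dpow assms(1) by (intro mult_left_mono) auto
  also have "\<dots> = c powr (a - 1) * (t * t powr ((1 + \<delta>) * (a - 1)))"
    using c_pos assms(1) by (simp add: powr_mult powr_powr mult.left_commute)
  also have "t * t powr ((1 + \<delta>) * (a - 1)) = t powr (1 + (1 + \<delta>) * (a - 1))"
    using assms(1) by (simp add: powr_mult_base)
  also have "1 + (1 + \<delta>) * (a - 1) = \<sigma> - \<delta>"
    using \<open>(1 + \<delta>) * a = \<sigma>\<close> by (simp add: algebra_simps)
  finally have "real b * D (Suc j) powr a \<le> c powr (a - 1) * t powr (\<sigma> - \<delta>)" .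
  then have "K * (real b * D (Suc j) powr a) \<le> K * (c powr (a - 1) * t powr (\<sigma> - \<delta>))"
    using K_nonneg by (rule mult_left_mono)
  then show ?thesis
    unfolding K\<^sub>1_def a_def[symmetric] by (simp only: mult.assoc mult.left_commute)
qed

lemma reduce_to_next_scale:
  assumes "0 \<le> t" "t \<le> D j"
  obtains t' where "0 \<le> t'" "t' < D (Suc j)" "\<bar>g (u + t) - g (u + t')\<bar> \<le> K\<^sub>1 * t powr (\<sigma> - \<delta>)"
proof (cases "t = 0")
  case True
  then show thesis using that[of 0] D_pos by simp
next
  case False
  define b where "b = nat \<lfloor>t / D (Suc j)\<rfloor>"
  define t' where "t' = t - real b * D (Suc j)"
  have "real b \<le> t / D (Suc j)" "t / D (Suc j) < real b + 1"
    using assms(1) D_pos[of "Suc j"] by (auto simp: b_def)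
  then have "0 \<le> t'" "t' < D (Suc j)"
    using D_pos[of "Suc j"] by (auto simp: t'_def field_simps)
  have "\<bar>g (u + t) - g (u + t')\<bar> = \<bar>g ((u + t') + real b * D (Suc j)) - g (u + t')\<bar>"
    by (simp add: t'_def)
  also have "\<dots> \<le> real b * (K * D (Suc j) powr (\<sigma> / (1 + \<delta>)))"
    using g_shift[of "Suc j"] by (intro shift_multiple_le) simp
  also have "\<dots> \<le> K\<^sub>1 * t powr (\<sigma> - \<delta>)"
    using False assms \<open>real b \<le> t / D (Suc j)\<close> by (intro shift_multiple_cost) auto
  finally show thesis by (rule that[OF \<open>0 \<le> t'\<close> \<open>t' < D (Suc j)\<close>])
qed

lemma reduce_below_scale:
  assumes "0 \<le> t" "t < D j"
  shows "\<exists>r. 0 \<le> r \<and> r \<le> D N \<and> \<bar>g (u + t) - g (u + r)\<bar> \<le> K\<^sub>2 * D j powr (\<sigma> - \<delta>)"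
  using assms
proof (induction j arbitrary: t rule: measure_induct_rule[of "\<lambda>j. N - j"])
  case (less j)
  show ?case
  proof (cases "N \<le> j")
    case True
    then show ?thesis
      using less.prems D_antimono[OF True] K\<^sub>2_nonneg by (intro exI[of _ t]) auto
  next
    case False
    have "0 < \<sigma> - \<delta>" using sigma_gt by simp
    obtain t\<^sub>1 where t\<^sub>1: "0 \<le> t\<^sub>1" "t\<^sub>1 < D (Suc j)"
      and step\<^sub>1: "\<bar>g (u + t) - g (u + t\<^sub>1)\<bar> \<le> K\<^sub>1 * t powr (\<sigma> - \<delta>)"
      using reduce_to_next_scale[OF less.prems(1) less_imp_le[OF less.prems(2)]] by blast
    obtain t\<^sub>2 where t\<^sub>2: "0 \<le> t\<^sub>2" "t\<^sub>2 < D (Suc (Suc j))"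
      and step\<^sub>2: "\<bar>g (u + t\<^sub>1) - g (u + t\<^sub>2)\<bar> \<le> K\<^sub>1 * t\<^sub>1 powr (\<sigma> - \<delta>)"
      using reduce_to_next_scale[OF t\<^sub>1(1) less_imp_le[OF t\<^sub>1(2)]] by blast
    obtain r where r: "0 \<le> r" "r \<le> D N"
      and rest: "\<bar>g (u + t\<^sub>2) - g (u + r)\<bar> \<le> K\<^sub>2 * D (Suc (Suc j)) powr (\<sigma> - \<delta>)"
      using less.IH[of "Suc (Suc j)" t\<^sub>2] False t\<^sub>2 by (auto simp: diff_less_mono2)
    have "K\<^sub>1 * t powr (\<sigma> - \<delta>) \<le> K\<^sub>1 * D j powr (\<sigma> - \<delta>)"
      using less.prems \<open>0 < \<sigma> - \<delta>\<close> K\<^sub>1_nonneg by (intro mult_left_mono powr_mono2) auto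
    moreover have "K\<^sub>1 * t\<^sub>1 powr (\<sigma> - \<delta>) \<le> K\<^sub>1 * D j powr (\<sigma> - \<delta>)"
      using t\<^sub>1 D_Suc_le[of j] \<open>0 < \<sigma> - \<delta>\<close> K\<^sub>1_nonneg by (intro mult_left_mono powr_mono2) auto
    moreover have "D (Suc (Suc j)) powr (\<sigma> - \<delta>) \<le> 2 powr (\<delta> - \<sigma>) * D j powr (\<sigma> - \<delta>)"
      using D_Suc_Suc_powr_le[of "\<sigma> - \<delta>" j] \<open>0 < \<sigma> - \<delta>\<close> by simp
    then have "K\<^sub>2 * D (Suc (Suc j)) powr (\<sigma> - \<delta>) \<le> K\<^sub>2 * 2 powr (\<delta> - \<sigma>) * D j powr (\<sigma> - \<delta>)"
      using K\<^sub>2_nonneg by (simp add: mult_left_mono mult.assoc)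
    ultimately have "\<bar>g (u + t) - g (u + r)\<bar> \<le> (2 * K\<^sub>1 + K\<^sub>2 * 2 powr (\<delta> - \<sigma>)) * D j powr (\<sigma> - \<delta>)"
      using step\<^sub>1 step\<^sub>2 rest by (simp add: algebra_simps)
    then show ?thesis
      using r K\<^sub>2_fixpoint by auto
  qed
qed

lemma increment_le_at_scale:
  assumes "0 \<le> t" "t < D j"
  shows "\<bar>g (u + t) - g u\<bar> \<le> K\<^sub>2 * D j powr (\<sigma> - \<delta>)"
proof (rule field_le_epsilon)
  fix e :: real
  assume "0 < e"
  then obtain \<eta> where "0 < \<eta>" and \<eta>: "\<And>s. dist s u < \<eta> \<Longrightarrow> dist (g s) (g u) < e"
    using g_cont unfolding continuous_on_iff by blast
  obtain N where "D N < \<eta>" using exists_D_less[OF \<open>0 < \<eta>\<close>] by blast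
  obtain r where "0 \<le> r" "r \<le> D N" and r: "\<bar>g (u + t) - g (u + r)\<bar> \<le> K\<^sub>2 * D j powr (\<sigma> - \<delta>)"
    using reduce_below_scale[OF assms] by blast
  have "\<bar>g (u + r) - g u\<bar> < e"
    using \<eta>[of "u + r"] \<open>0 \<le> r\<close> \<open>r \<le> D N\<close> \<open>D N < \<eta>\<close> by (simp add: dist_real_def)
  with r show "\<bar>g (u + t) - g u\<bar> \<le> K\<^sub>2 * D j powr (\<sigma> - \<delta>) + e"
    by linarith
qed

lemma increment_le:
  obtains A where "\<And>u t. 0 \<le> t \<Longrightarrow> \<bar>g (u + t) - g u\<bar> \<le> A * t powr (\<sigma> - \<delta>)"
proof -
  have "0 < \<sigma> - \<delta>" using sigma_gt by simp
  obtain M where M: "\<And>x. \<bar>g x\<bar> \<le> M"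
    using g_bounded unfolding bounded_real by blast
  define A where "A = max (K\<^sub>1 + K\<^sub>2) (2 * M / D 0 powr (\<sigma> - \<delta>))"
  have "\<bar>g (u + t) - g u\<bar> \<le> A * t powr (\<sigma> - \<delta>)" if "0 \<le> t" for u t
  proof (cases "t < D 0")
    case True
    show ?thesis
    proof (cases "t = 0")
      case False
      with that True obtain j where j: "D (Suc j) \<le> t" "t < D j"
        using D_bracket by (metis order_le_less)
      obtain t' where t': "0 \<le> t'" "t' < D (Suc j)"
        and step: "\<bar>g (u + t) - g (u + t')\<bar> \<le> K\<^sub>1 * t powr (\<sigma> - \<delta>)"
        using reduce_to_next_scale[OF \<open>0 \<le> t\<close> less_imp_le[OF j(2)]] by blast
      have "\<bar>g (u + t') - g u\<bar> \<le> K\<^sub>2 * D (Suc j) powr (\<sigma> - \<delta>)"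
        using t' by (rule increment_le_at_scale)
      also have "\<dots> \<le> K\<^sub>2 * t powr (\<sigma> - \<delta>)"
        using j D_pos \<open>0 < \<sigma> - \<delta>\<close> K\<^sub>2_nonneg by (intro mult_left_mono powr_mono2) (auto simp: less_imp_le)
      finally have "\<bar>g (u + t) - g u\<bar> \<le> (K\<^sub>1 + K\<^sub>2) * t powr (\<sigma> - \<delta>)"
        using step by (simp add: algebra_simps)
      also have "\<dots> \<le> A * t powr (\<sigma> - \<delta>)"
        by (intro mult_right_mono) (auto simp: A_def)
      finally show ?thesis .
    qed simp
  next
    case False
    have "\<bar>g (u + t) - g u\<bar> \<le> 2 * M / D 0 powr (\<sigma> - \<delta>) * D 0 powr (\<sigma> - \<delta>)"
      using M[of "u + t"] M[of u] D_pos[of 0] by simp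
    also have "\<dots> \<le> A * t powr (\<sigma> - \<delta>)"
      using False M[of 0] D_pos[of 0] \<open>0 < \<sigma> - \<delta>\<close>
      by (intro mult_mono powr_mono2) (auto simp: A_def le_max_iff_disj)
    finally show ?thesis .
  qed
  then show thesis by (rule that)
qed

lemma holder_continuous:
  obtains A where "\<And>x y. \<bar>g x - g y\<bar> \<le> A * \<bar>x - y\<bar> powr (\<sigma> - \<delta>)"
proof -
  obtain A where A: "\<And>u t. 0 \<le> t \<Longrightarrow> \<bar>g (u + t) - g u\<bar> \<le> A * t powr (\<sigma> - \<delta>)"
    using increment_le by blast
  have "\<bar>g x - g y\<bar> \<le> A * \<bar>x - y\<bar> powr (\<sigma> - \<delta>)" for x y
    using A[of "x - y" y] A[of "y - x" x] by (cases "y \<le> x") (auto simp: abs_minus_commute)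
  then show thesis by (rule that)
qed

end

lemma cf_Delta_sh_diophantine_scales:
  assumes "r \<in> diophantine_class \<delta>" "0 < r" "r < 1" "0 \<le> \<delta>"
  obtains c where "diophantine_scales (cf_Delta_sh r) c \<delta>"
proof -
  have irr: "r \<notin> \<rat>" using assms(1) by (simp add: diophantine_class_def)
  obtain c where "c > 0" "\<And>m. c * cf_Delta_sh r m powr (1 + \<delta>) \<le> cf_Delta_sh r (Suc m)"
    using cf_Delta_sh_diophantine[OF assms] by blast
  then have "diophantine_scales (cf_Delta_sh r) c \<delta>"
    using cf_Delta_sh_pos[OF irr assms(2,3)] cf_Delta_sh_Suc_le[OF irr assms(2,3)]
      cf_Delta_sh_Suc_Suc_le_half[OF irr assms(2,3)] assms(4)
    by unfold_locales auto
  then show thesis by (rule that)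
qed

lemma cf_E_nonneg:
  assumes "r \<notin> \<rat>" "0 < r" "r < 1"
  shows "0 \<le> cf_E r n \<sigma>"
  unfolding cf_E_def using cf_Delta_sh_pos[OF assms]
  by (intro sum_nonneg mult_nonneg_nonneg divide_nonneg_nonneg) (auto intro: less_imp_le)

lemma cf_E_le_Delta_powr:
  assumes "r \<in> diophantine_class \<delta>" "0 < r" "r < 1" "0 \<le> \<delta>" "0 \<le> \<sigma>" "\<sigma> < 1 + \<delta>"
  shows "\<exists>C. \<forall>n. cf_E r n \<sigma> \<le> C * cf_Delta r n powr (\<sigma> / (1 + \<delta>))"
proof -
  obtain c where scales: "diophantine_scales (cf_Delta_sh r) c \<delta>"
    using cf_Delta_sh_diophantine_scales[OF assms(1-4)] .
  have exponent: "(1 + \<delta>) * (\<sigma> / (1 + \<delta>)) = \<sigma>"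
    using assms(4) by simp
  have "0 \<le> \<sigma> / (1 + \<delta>)" "\<sigma> / (1 + \<delta>) < 1"
    using assms(4-6) by (simp_all add: divide_less_eq)
  then have "\<exists>C. \<forall>n. (\<Sum>k=0..n. cf_Delta_sh r (Suc n) / cf_Delta_sh r (Suc (n - k))
         * cf_Delta_sh r (n - k) powr ((1 + \<delta>) * (\<sigma> / (1 + \<delta>)))) \<le> C * cf_Delta_sh r (Suc n) powr (\<sigma> / (1 + \<delta>))"
    by (rule diophantine_scales.scale_sum_le[OF scales])
  then obtain C where "\<And>n. (\<Sum>k=0..n. cf_Delta_sh r (Suc n) / cf_Delta_sh r (Suc (n - k))
                              * cf_Delta_sh r (n - k) powr \<sigma>) \<le> C * cf_Delta_sh r (Suc n) powr (\<sigma> / (1 + \<delta>))"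
    unfolding exponent by blast
  then show ?thesis
    by (auto simp: cf_E_def cf_Delta_def)
qed

section \<open>Circle maps with an invariant density\<close>

lemma periodic_add_of_int:
  fixes f :: "real \<Rightarrow> 'a"
  assumes "\<And>x. f (x + 1) = f x"
  shows "f (x + of_int k) = f x"
proof (induction k rule: int_induct[of _ 0])
  case (step1 i)
  then show ?case using assms[of "x + of_int i"] by (simp add: add.assoc)
next
  case (step2 i)
  then show ?case using assms[of "x + of_int (i - 1)"] by (simp add: add.assoc)
qed simp

lemma lift_add_of_int:
  fixes F :: "real \<Rightarrow> real"
  assumes "\<And>x. F (x + 1) = F x + 1"
  shows "F (x + of_int k) = F x + of_int k"
  using periodic_add_of_int[of "\<lambda>x. F x - x" x k] assms by (simp add: algebra_simps)

lemma periodic_bounded: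
  fixes f :: "real \<Rightarrow> real"
  assumes "\<And>x. f (x + 1) = f x" and "continuous_on UNIV f"
  shows "bounded (range f)"
proof -
  have "f x = f (frac x)" for x
    using periodic_add_of_int[of f "frac x" "\<lfloor>x\<rfloor>"] assms(1) by (simp add: frac_def)
  moreover have "frac x \<in> {0..1}" for x
    using frac_lt_1[of x] by simp
  ultimately have "f x \<in> f ` {0..1}" for x
    by (metis image_eqI)
  then have "range f \<subseteq> f ` {0..1}"
    by auto
  moreover have "compact (f ` {0..1})"
    using assms(2) by (intro compact_continuous_image) (auto intro: continuous_on_subset)
  ultimately show ?thesis
    using bounded_subset compact_imp_bounded by blast
qed

lemma lift_surj:
  fixes F :: "real \<Rightarrow> real"
  assumes lift: "\<And>x. F (x + 1) = F x + 1" and cont: "continuous_on UNIV F"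
  shows "surj F"
proof -
  have "\<exists>x. F x = y" for y
  proof -
    define n where "n = \<lfloor>y - F 0\<rfloor>"
    have "F (of_int n) = F 0 + of_int n"
      using lift_add_of_int[of F 0 n, OF lift] by simp
    then have "F (of_int n) \<le> y" "y \<le> F (of_int n + 1)"
      using lift[of "of_int n"] unfolding n_def by linarith+
    then show ?thesis
      using IVT'[of F "of_int n" y "of_int n + 1"] continuous_on_subset[OF cont] by auto
  qed
  then show ?thesis by (metis surj_def)
qed

lemma positive_derivative_strict_mono:
  fixes F :: "real \<Rightarrow> real"
  assumes "\<And>x. (F has_real_derivative F' x) (at x)" and "\<And>x. 0 < F' x"
  shows "strict_mono F"
proof (rule strict_monoI)
  fix x y :: real
  assume "x < y"
  then show "F x < F y"
  proof (rule DERIV_pos_imp_increasing)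
    fix z
    show "\<exists>y. (F has_real_derivative y) (at z) \<and> 0 < y"
      using assms by blast
  qed
qed

locale invariant_density =
  fixes F F' h :: "real \<Rightarrow> real"
  assumes lift: "\<And>x. F (x + 1) = F x + 1"
    and F_deriv: "\<And>x. (F has_real_derivative F' x) (at x)"
    and F'_pos: "\<And>x. 0 < F' x"
    and h_periodic: "\<And>x. h (x + 1) = h x"
    and h_cont: "continuous_on UNIV h"
    and h_pos: "\<And>x. 0 < h x"
    and h_integral: "integral {0..1} h = 1"
    and h_invariant: "\<And>A. A \<in> sets borel \<Longrightarrow>
          emeasure (density lborel h) (F -` A) = emeasure (density lborel h) A"
begin

lemma F_strict_mono: "strict_mono F"
  using F_deriv F'_pos by (rule positive_derivative_strict_mono)

definition H :: "real \<Rightarrow> real" where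
  "H x = (LBINT y=(0::real)..x. h y)"

lemma H_deriv: "(H has_real_derivative h x) (at x)"
proof -
  define a b where "a = min x 0 - 1" and "b = max x 0 + 1"
  have "((\<lambda>u. LBINT y=(0::real)..u. h y) has_vector_derivative h x) (at x within {a..b})"
  proof (rule interval_integral_FTC2)
    show "continuous_on {a..b} h"
      using continuous_on_subset[OF h_cont] by blast
  qed (auto simp: a_def b_def)
  moreover have "at x within {a..b} = at x"
    by (intro at_within_interior) (auto simp: a_def b_def)
  ultimately show ?thesis
    by (simp add: H_def[abs_def] has_real_derivative_iff_has_vector_derivative)
qed

lemma H_has_integral: "a \<le> b \<Longrightarrow> (h has_integral (H b - H a)) {a..b}"
  using H_deriv
  by (intro fundamental_theorem_of_calculus)
     (auto simp: has_real_derivative_iff_has_vector_derivative intro: has_vector_derivative_at_within)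

lemma H_lift: "H (x + 1) = H x + 1"
proof -
  have "\<forall>y. ((\<lambda>x. H (x + 1) - H x) has_real_derivative 0) (at y)"
    using DERIV_diff[OF DERIV_chain2[OF H_deriv DERIV_add[OF DERIV_ident DERIV_const[of 1]]] H_deriv]
    by (simp add: h_periodic)
  from DERIV_isconst_all[OF this, of x 0] have "H (x + 1) - H x = H 1 - H 0"
    by simp
  also have "\<dots> = 1"
    using integral_unique[OF H_has_integral[of 0 1]] h_integral by simp
  finally show ?thesis by simp
qed

lemma H_strict_mono: "strict_mono H"
  using H_deriv h_pos by (rule positive_derivative_strict_mono)

lemma H_cont: "continuous_on UNIV H"
  using DERIV_isCont[OF H_deriv] by (simp add: continuous_at_imp_continuous_on)

lemma H_surj: "surj H"
  using H_lift H_cont by (rule lift_surj)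

lemma emeasure_density_atLeastAtMost: "a \<le> b \<Longrightarrow> emeasure (density lborel h) {a..b} = ennreal (H b - H a)"
  using h_pos
  by (simp add: emeasure_density borel_measurable_continuous_onI[OF h_cont] less_imp_le
                nn_integral_has_integral_lebesgue' H_has_integral)

lemma H_F_diff:
  assumes "a \<le> b"
  shows "H (F b) - H (F a) = H b - H a"
proof -
  have "F -` {F a..F b} = {a..b}"
    using F_strict_mono by (auto simp: strict_mono_less_eq)
  then have "ennreal (H (F b) - H (F a)) = ennreal (H b - H a)"
    using h_invariant[of "{F a..F b}"] assms F_strict_mono
    by (simp add: emeasure_density_atLeastAtMost strict_mono_less_eq)
  moreover have "H a \<le> H b" "H (F a) \<le> H (F b)"
    using assms H_strict_mono F_strict_mono by (simp_all add: strict_mono_less_eq)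
  ultimately show ?thesis by simp
qed

definition \<kappa> :: real where
  "\<kappa> = H (F 0) - H 0"

lemma H_F: "H (F x) = H x + \<kappa>"
  using H_F_diff[of 0 x] H_F_diff[of x 0] by (cases "0 \<le> x") (auto simp: \<kappa>_def)

lemma H_funpow: "H ((F ^^ n) x) = H x + real n * \<kappa>"
  by (induction n) (simp_all add: H_F algebra_simps)

lemma F'_eq: "F' x = h x / h (F x)"
proof -
  have "((\<lambda>x. H (F x)) has_real_derivative h (F x) * F' x) (at x)"
    by (rule DERIV_chain2[OF H_deriv F_deriv])
  moreover have "((\<lambda>x. H (F x)) has_real_derivative h x) (at x)"
    unfolding H_F using DERIV_add[OF H_deriv DERIV_const] by simp
  ultimately have "h (F x) * F' x = h x"
    by (rule DERIV_unique)
  then show ?thesis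
    using h_pos[of "F x"] by (simp add: field_simps)
qed

lemma funpow_deriv: "((F ^^ n) has_real_derivative h x / h ((F ^^ n) x)) (at x)"
proof (induction n)
  case 0
  show ?case using h_pos[of x] by (simp add: DERIV_ident)
next
  case (Suc n)
  have "((\<lambda>x. F ((F ^^ n) x)) has_real_derivative F' ((F ^^ n) x) * (h x / h ((F ^^ n) x))) (at x)"
    by (rule DERIV_chain2[OF F_deriv Suc])
  then show ?case
    using h_pos[of "(F ^^ n) x"] by (simp add: F'_eq)
qed

lemma deriv_funpow: "deriv (F ^^ n) x = h x / h ((F ^^ n) x)"
  by (rule DERIV_imp_deriv[OF funpow_deriv])

lemma rotation_number_eq: "rotation_number F = frac \<kappa>"
proof -
  have "continuous_on UNIV (\<lambda>y. H y - y)"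
    by (intro continuous_intros H_cont)
  then obtain B where B: "\<And>y. \<bar>H y - y\<bar> \<le> B"
    using periodic_bounded[of "\<lambda>y. H y - y"] H_lift by (auto simp: bounded_real)
  have "(\<lambda>n. (F ^^ n) 0 / real n - \<kappa>) \<longlonglongrightarrow> 0"
  proof (rule Lim_null_comparison)
    show "\<forall>\<^sub>F n in sequentially. norm ((F ^^ n) 0 / real n - \<kappa>) \<le> (B + \<bar>H 0\<bar>) / real n"
      using eventually_gt_at_top[of 0]
    proof eventually_elim
      case (elim n)
      have "\<bar>(F ^^ n) 0 - real n * \<kappa>\<bar> \<le> B + \<bar>H 0\<bar>"
        using B[of "(F ^^ n) 0"] H_funpow[of n 0] by linarith
      moreover have "(F ^^ n) 0 / real n - \<kappa> = ((F ^^ n) 0 - real n * \<kappa>) / real n"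
        using elim by (simp add: field_simps)
      ultimately show ?case
        using elim by (simp add: divide_right_mono)
    qed
    show "(\<lambda>n. (B + \<bar>H 0\<bar>) / real n) \<longlonglongrightarrow> 0"
      by (rule lim_const_over_n)
  qed
  then show ?thesis
    unfolding rotation_number_def by (simp add: LIM_zero_iff limI)
qed

lemma H_lipschitz:
  assumes "\<And>x. h x \<le> M"
  shows "\<bar>H x - H y\<bar> \<le> M * \<bar>x - y\<bar>"
proof -
  have le: "\<bar>H b - H a\<bar> \<le> M * \<bar>b - a\<bar>" if "a \<le> b" for a b
    using has_integral_le[OF H_has_integral[OF that] has_integral_const_real[of M a b]] assms that
    using H_strict_mono by (simp add: strict_mono_less_eq mult.commute)
  show ?thesis
    using le[of x y] le[of y x] by (cases "y \<le> x") (simp_all add: abs_minus_commute)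
qed

lemma H_inv_H: "H (inv H u) = u"
  using H_surj by (rule surj_f_inv_f)

lemma inv_H_H: "inv H (H x) = x"
  using strict_mono_imp_inj_on[OF H_strict_mono] by (simp add: inv_f_f)

definition g :: "real \<Rightarrow> real" where
  "g u = h (inv H u)"

lemma g_H: "g (H x) = h x"
  by (simp add: g_def inv_H_H)

lemma g_periodic: "g (u + 1) = g u"
proof -
  have "H (inv H u + 1) = u + 1" by (simp add: H_lift H_inv_H)
  then have "inv H (u + 1) = inv H u + 1" by (metis inv_H_H)
  then show ?thesis by (simp add: g_def h_periodic)
qed

lemma g_cont: "continuous_on UNIV g"
proof -
  have "isCont (inv H) u" for u
  proof -
    have "isCont (inv H) (H (inv H u))"
    proof (rule isCont_inverse_function[where d = 1 and f = H and x = "inv H u"])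
      show "\<And>z. \<bar>z - inv H u\<bar> \<le> 1 \<Longrightarrow> inv H (H z) = z"
        by (rule inv_H_H)
      show "\<And>z. \<bar>z - inv H u\<bar> \<le> 1 \<Longrightarrow> isCont H z"
        by (rule DERIV_isCont[OF H_deriv])
    qed simp
    then show ?thesis by (simp add: H_inv_H)
  qed
  moreover have "isCont h x" for x
    using h_cont by (simp add: continuous_on_eq_continuous_at)
  ultimately have "isCont g u" for u
    unfolding g_def[abs_def] by (metis isCont_o2)
  then show ?thesis
    by (simp add: continuous_at_imp_continuous_on)
qed

lemma g_bounded: "bounded (range g)"
  using g_periodic g_cont by (rule periodic_bounded)

lemma g_translate_le:
  assumes "\<And>x. h x \<le> M"
  shows "\<bar>g (w + real n * rotation_number F + of_int m) - g w\<bar> \<le> M * \<bar>deriv (F ^^ n) (inv H w) - 1\<bar>"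
proof -
  define \<xi> where "\<xi> = inv H w"
  have "w + real n * rotation_number F + of_int m = H ((F ^^ n) \<xi>) + of_int (m - int n * \<lfloor>\<kappa>\<rfloor>)"
    by (simp add: \<xi>_def H_funpow H_inv_H rotation_number_eq frac_def algebra_simps)
  then have "g (w + real n * rotation_number F + of_int m) = h ((F ^^ n) \<xi>)"
    by (simp only: periodic_add_of_int[of g, OF g_periodic] g_H)
  moreover have "g w = h \<xi>"
    by (simp add: \<xi>_def g_def)
  moreover have "\<bar>h ((F ^^ n) \<xi>) - h \<xi>\<bar> = h ((F ^^ n) \<xi>) * \<bar>deriv (F ^^ n) \<xi> - 1\<bar>"
    using h_pos[of "(F ^^ n) \<xi>"] by (simp add: deriv_funpow abs_mult_pos' abs_div field_simps abs_minus_commute)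
  moreover have "h ((F ^^ n) \<xi>) * \<bar>deriv (F ^^ n) \<xi> - 1\<bar> \<le> M * \<bar>deriv (F ^^ n) \<xi> - 1\<bar>"
    using assms by (intro mult_right_mono) auto
  ultimately show ?thesis
    by (simp add: \<xi>_def)
qed

lemma rotation_number_bounds:
  assumes "rotation_number F \<notin> \<rat>"
  shows "0 < rotation_number F" "rotation_number F < 1"
  using assms frac_lt_1[of \<kappa>] frac_ge_0[of \<kappa>] unfolding rotation_number_eq
  by (metis Rats_0 order_le_less)+

lemma h_holder_if_g_holder:
  assumes "0 \<le> \<beta>" and g_holder: "\<And>u v. \<bar>g u - g v\<bar> \<le> A * \<bar>u - v\<bar> powr \<beta>"
  obtains A' where "\<And>x y. \<bar>h x - h y\<bar> \<le> A' * \<bar>x - y\<bar> powr \<beta>"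
proof -
  obtain M where M: "\<And>x. \<bar>h x\<bar> \<le> M"
    using periodic_bounded[OF h_periodic h_cont] by (auto simp: bounded_real)
  have "\<bar>h x - h y\<bar> \<le> max A 0 * M powr \<beta> * \<bar>x - y\<bar> powr \<beta>" for x y
  proof -
    have "\<bar>h x - h y\<bar> \<le> max A 0 * \<bar>H x - H y\<bar> powr \<beta>"
      using g_holder[of "H x" "H y"] by (simp add: g_H) (smt (verit) mult_right_mono powr_ge_zero)
    also have "\<dots> \<le> max A 0 * (M * \<bar>x - y\<bar>) powr \<beta>"
      using H_lipschitz[of M x y] M \<open>0 \<le> \<beta>\<close> by (intro mult_left_mono powr_mono2) (auto simp: abs_le_iff)
    finally show ?thesis
      using M[of 0] by (simp add: powr_mult mult_ac)
  qed
  then show thesis by (rule that)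
qed

lemma g_shift_le:
  assumes irr: "rotation_number F \<notin> \<rat>" and M: "\<And>x. h x \<le> M" "0 \<le> M" and "1 \<le> i"
    and bound: "\<And>n \<xi>. \<bar>deriv (F ^^ nat (cf_q (rotation_number F) n)) \<xi> - 1\<bar>
                      \<le> C * cf_Delta (rotation_number F) n powr a"
  shows "\<bar>g (v + cf_Delta_sh (rotation_number F) i) - g v\<bar> \<le> M * C * cf_Delta_sh (rotation_number F) i powr a"
proof -
  define \<rho> where "\<rho> = rotation_number F"
  obtain n where i: "i = Suc n" using \<open>1 \<le> i\<close> by (cases i) auto
  define q e where "q = nat (cf_q \<rho> n)" and "e = real q * \<rho> + of_int (- cf_p \<rho> n)"
  have "\<bar>e\<bar> = cf_Delta_sh \<rho> i"
    using cf_q_sh_ge_1[OF irr rotation_number_bounds[OF irr], of n]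
    by (simp add: cf_Delta_sh_def e_def q_def i cf_q_def cf_p_def \<rho>_def)
  have key: "\<bar>g (w + e) - g w\<bar> \<le> M * C * cf_Delta_sh \<rho> i powr a" for w
  proof -
    have "\<bar>g (w + e) - g w\<bar> \<le> M * \<bar>deriv (F ^^ q) (inv H w) - 1\<bar>"
      using g_translate_le[of M w q "- cf_p \<rho> n"] M(1) by (simp add: e_def \<rho>_def add_diff_eq)
    also have "\<dots> \<le> M * (C * cf_Delta_sh \<rho> i powr a)"
      using bound[of n "inv H w"] M(2) by (intro mult_left_mono) (simp_all add: q_def i \<rho>_def cf_Delta_def)
    finally show ?thesis by (simp add: mult_ac)
  qed
  show ?thesis
  proof (cases "0 \<le> e")
    case True
    then show ?thesis using key[of v] \<open>\<bar>e\<bar> = _\<close> by (simp add: \<rho>_def)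
  next
    case False
    then have "e = - cf_Delta_sh \<rho> i" using \<open>\<bar>e\<bar> = _\<close> by simp
    then show ?thesis using key[of "v + cf_Delta_sh \<rho> i"] by (simp add: abs_minus_commute \<rho>_def)
  qed
qed

lemma h_holder:
  assumes dioph: "rotation_number F \<in> diophantine_class \<delta>" and "0 \<le> \<delta>" "\<delta> < \<sigma>" "\<sigma> < 1 + \<delta>"
    and bound: "\<And>n \<xi>. \<bar>deriv (F ^^ nat (cf_q (rotation_number F) n)) \<xi> - 1\<bar>
                      \<le> C * cf_Delta (rotation_number F) n powr (\<sigma> / (1 + \<delta>))"
  obtains A where "\<And>x y. \<bar>h x - h y\<bar> \<le> A * \<bar>x - y\<bar> powr (\<sigma> - \<delta>)"
proof -
  define \<rho> where "\<rho> = rotation_number F"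
  have irr: "\<rho> \<notin> \<rat>" using dioph by (simp add: \<rho>_def diophantine_class_def)
  obtain c where scales: "diophantine_scales (cf_Delta_sh \<rho>) c \<delta>"
    using cf_Delta_sh_diophantine_scales dioph rotation_number_bounds[folded \<rho>_def, OF irr] \<open>0 \<le> \<delta>\<close>
    unfolding \<rho>_def by blast
  obtain M where M: "\<And>x. \<bar>h x\<bar> \<le> M"
    using periodic_bounded[OF h_periodic h_cont] by (auto simp: bounded_real)
  then have "0 \<le> M" "\<And>x. h x \<le> M"
    using abs_ge_zero order_trans abs_le_D1 by blast+
  have "\<bar>deriv (F ^^ nat (cf_q \<rho> n)) \<xi> - 1\<bar> \<le> max C 0 * cf_Delta \<rho> n powr (\<sigma> / (1 + \<delta>))" for n \<xi>
    using bound[of n \<xi>, folded \<rho>_def] by (rule order_trans) (simp add: mult_right_mono)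
  then have "\<bar>g (v + cf_Delta_sh \<rho> i) - g v\<bar> \<le> M * max C 0 * cf_Delta_sh \<rho> i powr (\<sigma> / (1 + \<delta>))"
    if "1 \<le> i" for i v
    using g_shift_le[OF irr[unfolded \<rho>_def] \<open>\<And>x. h x \<le> M\<close> \<open>0 \<le> M\<close> that] unfolding \<rho>_def by blast
  then interpret shift_holder "cf_Delta_sh \<rho>" c \<delta> \<sigma> "M * max C 0" g
    using scales \<open>\<delta> < \<sigma>\<close> \<open>\<sigma> < 1 + \<delta>\<close> \<open>0 \<le> M\<close> g_cont g_bounded
    by (intro shift_holder.intro shift_holder_axioms.intro) auto
  obtain A where A: "\<And>u v. \<bar>g u - g v\<bar> \<le> A * \<bar>u - v\<bar> powr (\<sigma> - \<delta>)"
    using holder_continuous by blast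
  have "0 \<le> \<sigma> - \<delta>" using \<open>\<delta> < \<sigma>\<close> by simp
  then show thesis
    using that by (rule h_holder_if_g_holder[OF _ A])
qed

end

theorem proposition4:
  fixes F F' h :: "real \<Rightarrow> real" and \<delta> \<sigma> :: real
  assumes delta: "\<delta> \<ge> 0"
    and lift: "\<And>x. F (x + 1) = F x + 1"
    and deriv_F: "\<And>x. (F has_real_derivative F' x) (at x)"
    and cont_F': "continuous_on UNIV F'"
    and pos_F': "\<And>x. F' x > 0"
    and rot: "rotation_number F \<in> diophantine_class \<delta>"
    and h_per: "\<And>x. h (x + 1) = h x"
    and h_cont: "continuous_on UNIV h"
    and h_pos: "\<And>x. h x > 0"
    and h_prob: "integral {0..1} h = 1"
    and h_inv: "\<And>A. A \<in> sets borel \<Longrightarrow>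
                 emeasure (density lborel h) (F -` A) = emeasure (density lborel h) A"
    and sigma: "0 \<le> \<sigma>" "\<sigma> < 1 + \<delta>"
    and bound: "\<exists>C. \<forall>n \<xi>. \<bar>deriv (F ^^ nat (cf_q (rotation_number F) n)) \<xi> - 1\<bar>
                          \<le> C * cf_E (rotation_number F) n \<sigma>"
  shows "(\<exists>C'. \<forall>n \<xi>. \<bar>deriv (F ^^ nat (cf_q (rotation_number F) n)) \<xi> - 1\<bar>
                    \<le> C' * cf_Delta (rotation_number F) n powr (\<sigma> / (1 + \<delta>)))
         \<and> h \<in> holder_class (max 0 (\<sigma> - \<delta>))"
proof -
  interpret invariant_density F F' h
    using lift deriv_F pos_F' h_per h_cont h_pos h_prob h_inv by unfold_locales
  let ?\<rho> = "rotation_number F"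
  have irr: "?\<rho> \<notin> \<rat>" using rot by (simp add: diophantine_class_def)
  note \<rho> = rotation_number_bounds[OF irr]
  obtain C where C: "\<And>n \<xi>. \<bar>deriv (F ^^ nat (cf_q ?\<rho> n)) \<xi> - 1\<bar> \<le> C * cf_E ?\<rho> n \<sigma>"
    using bound by blast
  obtain C\<^sub>E where C\<^sub>E: "\<And>n. cf_E ?\<rho> n \<sigma> \<le> C\<^sub>E * cf_Delta ?\<rho> n powr (\<sigma> / (1 + \<delta>))"
    using cf_E_le_Delta_powr[OF rot \<rho> delta sigma] by blast
  have improved: "\<bar>deriv (F ^^ nat (cf_q ?\<rho> n)) \<xi> - 1\<bar> \<le> (max C 0 * C\<^sub>E) * cf_Delta ?\<rho> n powr (\<sigma> / (1 + \<delta>))"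
    for n \<xi>
    using C[of n \<xi>] C\<^sub>E[of n] cf_E_nonneg[OF irr \<rho>, of n \<sigma>]
    by (smt (verit) max.cobounded1 max.cobounded2 mult.assoc mult_left_mono mult_right_mono)
  moreover have "h \<in> holder_class (max 0 (\<sigma> - \<delta>))"
  proof (cases "\<sigma> \<le> \<delta>")
    case True
    then show ?thesis using h_cont by (simp add: holder_class_def)
  next
    case False
    then obtain A where "\<And>x y. \<bar>h x - h y\<bar> \<le> A * \<bar>x - y\<bar> powr (\<sigma> - \<delta>)"
      using h_holder[OF rot delta _ sigma(2) improved] by auto
    then show ?thesis using False by (auto simp: holder_class_def)
  qed
  ultimately show ?thesis by blast
qed

end
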